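(* Let $(\sqrt5-1)/4<\alpha<1/2$. If $(x,y)\in A_1$ and $G_\alpha(x,y)\in A_2$, then $G_\alpha^2(x,y)\in A_2$; i.e., a point entering $A_2$ from $A_1$ stays in $A_2$ for at least two steps.
   Context: Let $\tau:[0,1]\to[0,1]$ be the symmetric tent map, $\tau(x)=2x$ for $0\le x<1/2$ and $\tau(x)=2-2x$ for $1/2\le x\le 1$. For $0<\alpha<1$ define $G_\alpha:[0,1]^2\to[0,1]^2$ by $G_\alpha(x,y)=(y,\tau(\alpha y+(1-\alpha)x))$. Let $S(x,y)=\alpha y+(1-\alpha)x$, $A_1=\{(x,y)\in[0,1]^2: S(x,y)<1/2\}$ and $A_2=\{(x,y)\in[0,1]^2: S(x,y)\ge 1/2\}$. *)

theory Defs
  imports Complex_Main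
begin

definition tent :: "real \<Rightarrow> real" where
  "tent x = (if x < 1/2 then 2 * x else 2 - 2 * x)"

definition S :: "real \<Rightarrow> real \<times> real \<Rightarrow> real" where
  "S \<alpha> p = \<alpha> * snd p + (1 - \<alpha>) * fst p"

definition G :: "real \<Rightarrow> real \<times> real \<Rightarrow> real \<times> real" where
  "G \<alpha> p = (snd p, tent (S \<alpha> p))"

definition unit_square :: "(real \<times> real) set" where
  "unit_square = {0..1} \<times> {0..1}"

definition A1 :: "real \<Rightarrow> (real \<times> real) set" where
  "A1 \<alpha> = {p \<in> unit_square. S \<alpha> p < 1/2}"

definition A2 :: "real \<Rightarrow> (real \<times> real) set" where
  "A2 \<alpha> = {p \<in> unit_square. S \<alpha> p \<ge> 1/2}"

end

theory Submission
  imports Defs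
begin

text \<open>Let \<open>s = S \<alpha> (x, y) < 1/2\<close> and \<open>t = S \<alpha> (G (x, y)) \<ge> 1/2\<close>. Then
  \<open>G (x, y) = (y, 2 s)\<close> and \<open>G\<^sup>2 (x, y) = (2 s, 2 - 2 t)\<close>, and with \<open>t = 2 \<alpha> s + (1 - \<alpha>) y\<close>
  the \<open>S\<close>-value of the latter is \<open>2 \<alpha> + 2 (1 - 2 \<alpha>) (1 + \<alpha>) s - 2 \<alpha> (1 - \<alpha>) y\<close>.
  Since \<open>s \<ge> \<alpha> y\<close> and \<open>y \<le> 1\<close> it is at least \<open>2 \<alpha> - 4 \<alpha>\<^sup>3\<close>, and
  \<open>2 \<alpha> - 4 \<alpha>\<^sup>3 - 1/2 = (1 - 2 \<alpha>) (4 \<alpha>\<^sup>2 + 2 \<alpha> - 1) / 2 > 0\<close> precisely because \<open>\<alpha>\<close> lies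
  between the positive root \<open>(\<surd>5 - 1)/4\<close> of the quadratic factor and \<open>1/2\<close>.\<close>

lemma tent_unit_interval: "x \<in> {0..1} \<Longrightarrow> tent x \<in> {0..1}"
  by (auto simp: tent_def)

lemma S_unit_interval:
  assumes "0 \<le> \<alpha>" "\<alpha> \<le> 1" "p \<in> unit_square"
  shows "S \<alpha> p \<in> {0..1}"
proof -
  obtain x y where p: "p = (x, y)" and xy: "x \<in> {0..1}" "y \<in> {0..1}"
    using assms(3) unfolding unit_square_def by blast
  have "\<alpha> * y \<le> \<alpha>" "(1 - \<alpha>) * x \<le> 1 - \<alpha>"
    using mult_left_le[of y \<alpha>] mult_left_le[of x "1 - \<alpha>"] assms(1,2) xy by auto
  moreover have "0 \<le> \<alpha> * y" "0 \<le> (1 - \<alpha>) * x"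
    using assms(1,2) xy by auto
  ultimately show ?thesis unfolding S_def p by simp
qed

lemma G_unit_square:
  assumes "0 \<le> \<alpha>" "\<alpha> \<le> 1" "p \<in> unit_square"
  shows "G \<alpha> p \<in> unit_square"
proof -
  have "snd p \<in> {0..1}" using assms(3) unfolding unit_square_def by auto
  moreover have "tent (S \<alpha> p) \<in> {0..1}" by (rule tent_unit_interval[OF S_unit_interval[OF assms]])
  ultimately show ?thesis unfolding G_def unit_square_def by simp
qed

lemma G_below_half: "S \<alpha> p < 1/2 \<Longrightarrow> G \<alpha> p = (snd p, 2 * S \<alpha> p)"
  by (simp add: G_def tent_def)

lemma G_above_half: "1/2 \<le> S \<alpha> p \<Longrightarrow> G \<alpha> p = (snd p, 2 - 2 * S \<alpha> p)"
  by (simp add: G_def tent_def)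

lemma G_twice_below_above_half:
  assumes "S \<alpha> p < 1/2" "1/2 \<le> S \<alpha> (G \<alpha> p)"
  shows "(G \<alpha> ^^ 2) p = (2 * S \<alpha> p, 2 - 2 * S \<alpha> (G \<alpha> p))"
  using G_above_half[OF assms(2)] G_below_half[OF assms(1)] by (simp add: numeral_2_eq_2)

lemma pos_quadratic_above_root:
  fixes \<alpha> :: real
  assumes "(sqrt 5 - 1) / 4 < \<alpha>"
  shows "0 < \<alpha>" and "0 < 4 * \<alpha>\<^sup>2 + 2 * \<alpha> - 1"
proof -
  have "1 < sqrt 5" by (simp add: real_less_rsqrt)
  moreover have "sqrt 5 - 1 < 4 * \<alpha>" using assms by (simp add: field_simps)
  ultimately show "0 < \<alpha>" by linarith
  have "sqrt 5 < 4 * \<alpha> + 1" using assms by simp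
  then have "(sqrt 5)\<^sup>2 < (4 * \<alpha> + 1)\<^sup>2"
    by (intro power_strict_mono) auto
  then show "0 < 4 * \<alpha>\<^sup>2 + 2 * \<alpha> - 1"
    by (simp add: power2_eq_square algebra_simps)
qed

lemma half_le_two_alpha_minus_cube:
  fixes \<alpha> :: real
  assumes "(sqrt 5 - 1) / 4 < \<alpha>" "\<alpha> \<le> 1/2"
  shows "1/2 \<le> 2 * \<alpha> - 4 * \<alpha> ^ 3"
proof -
  have "0 \<le> (1 - 2 * \<alpha>) * (4 * \<alpha>\<^sup>2 + 2 * \<alpha> - 1)"
    using pos_quadratic_above_root(2)[OF assms(1)] assms(2) by simp
  then show ?thesis by (simp add: algebra_simps power2_eq_square power3_eq_cube)
qed

lemma second_return_lower_bound:
  fixes \<alpha> x y :: real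
  assumes "0 \<le> \<alpha>" "\<alpha> \<le> 1/2" "0 \<le> x" "0 \<le> y" "y \<le> 1"
  defines "s \<equiv> \<alpha> * y + (1 - \<alpha>) * x"
  shows "2 * \<alpha> - 4 * \<alpha> ^ 3 \<le> \<alpha> * (2 - 2 * (\<alpha> * (2 * s) + (1 - \<alpha>) * y)) + (1 - \<alpha>) * (2 * s)"
proof -
  let ?c = "2 - 2 * \<alpha> - 4 * \<alpha>\<^sup>2"
  have expand: "\<alpha> * (2 - 2 * (\<alpha> * (2 * s) + (1 - \<alpha>) * y)) + (1 - \<alpha>) * (2 * s)
      = 2 * \<alpha> + s * ?c - 2 * \<alpha> * (1 - \<alpha>) * y"
    by (simp add: algebra_simps power2_eq_square)
  have "\<alpha> * y \<le> s" using assms unfolding s_def by simp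
  moreover have "0 \<le> ?c"
    using assms(1,2) mult_mono[of \<alpha> "1/2" \<alpha> "1/2"] by (simp add: power2_eq_square)
  ultimately have "\<alpha> * y * ?c \<le> s * ?c" by (rule mult_right_mono)
  moreover have "\<alpha> * y * ?c - 2 * \<alpha> * (1 - \<alpha>) * y = - 4 * (\<alpha> ^ 3 * y)"
    by (simp add: algebra_simps power2_eq_square power3_eq_cube)
  moreover have "\<alpha> ^ 3 * y \<le> \<alpha> ^ 3" using assms by (simp add: mult_left_le)
  ultimately show ?thesis
    unfolding expand by linarith
qed

theorem proposition7:
  fixes \<alpha> :: real and p :: "real \<times> real"
  assumes "(sqrt 5 - 1) / 4 < \<alpha>" and "\<alpha> < 1/2"
    and "p \<in> A1 \<alpha>" and "G \<alpha> p \<in> A2 \<alpha>"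
  shows "(G \<alpha> ^^ 2) p \<in> A2 \<alpha>"
proof -
  obtain x y where p: "p = (x, y)" by (cases p)
  have \<alpha>: "0 < \<alpha>" using pos_quadratic_above_root(1)[OF assms(1)] .
  define s where "s = S \<alpha> p"
  define t where "t = S \<alpha> (G \<alpha> p)"
  have s: "s < 1/2" and t: "1/2 \<le> t" and xy: "0 \<le> x" "0 \<le> y" "y \<le> 1"
    using assms(3,4) by (auto simp: A1_def A2_def s_def t_def p unit_square_def)
  have G2: "(G \<alpha> ^^ 2) p = (2 * s, 2 - 2 * t)"
    using G_twice_below_above_half s t unfolding s_def t_def .
  have "G \<alpha> (G \<alpha> p) \<in> unit_square"
    using \<alpha> assms(2,3) by (intro G_unit_square) (auto simp: A1_def)
  then have "(2 * s, 2 - 2 * t) \<in> unit_square"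
    using G2 by (simp add: numeral_2_eq_2)
  moreover have "1/2 \<le> S \<alpha> (2 * s, 2 - 2 * t)"
  proof -
    have s_eq: "s = \<alpha> * y + (1 - \<alpha>) * x" by (simp add: s_def p S_def)
    have t_eq: "t = \<alpha> * (2 * s) + (1 - \<alpha>) * y"
      using G_below_half[of \<alpha> p] s by (simp add: t_def s_def p S_def)
    have "2 * \<alpha> - 4 * \<alpha> ^ 3 \<le> \<alpha> * (2 - 2 * t) + (1 - \<alpha>) * (2 * s)"
      using second_return_lower_bound[of \<alpha> x y, folded s_eq, folded t_eq] \<alpha> assms(2) xy
      by simp
    then show ?thesis
      using half_le_two_alpha_minus_cube[OF assms(1)] assms(2) unfolding S_def by simp
  qed
  ultimately show ?thesis by (simp add: A2_def G2)
qed

end
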